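(* Let $G$ and $H$ be fully supported graphs with no self-loops. Then $G$ and $H$ are strongly disjoint if and only if they are weakly disjoint and exactly one of the two graphs is a forest.
   Context: A weight function on finite $U$ is $\alpha:U\times U\to\mathbb{R}$, $\alpha\ge0$, symmetric, summing to $1$; degree $p(u)=\sum_{u'}\alpha(u,u')$. A graph is $G=(U,\alpha)$ with edges $(u,u')$ where $\alpha(u,u')>0$; a self-loop is an edge $(u,u)$; $G$ is fully supported if $p(u)>0$ for all $u$; a forest is a graph with no cycles (as an undirected graph). For graphs $(U,\alpha)$, $(V,\beta)$ with degrees $p,q$, a weight joining is a weight function $\gamma$ on $U\times V$ with degree $r(u,v)=\sum_{(u',v')}\gamma((u,v),(u',v'))$ such that $\sum_v r(u,v)=p(u)$, $\sum_u r(u,v)=q(v)$, $p(u)\sum_{\tilde v}\gamma((u,v),(u',\tilde v))=\alpha(u,u')r(u,v)$ and $q(v)\sum_{\tilde u}\gamma((u,v),(\tilde u,v'))=\beta(v,v')r(u,v)$ for all $u,u',v,v'$. The graphs are strongly disjoint if the only weight joining is $\alpha\otimes\beta$, $(\alpha\otimes\beta)((u,v),(u',v'))=\alpha(u,u')\beta(v,v')$; weakly disjoint if every weight joining has degree $r(u,v)=p(u)q(v)$. *)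

theory Defs
  imports Complex_Main
begin

text \<open>Weight functions on a finite vertex type (the finite set U is the universe of a
finite type).\<close>

definition weight_fun :: "('a::finite \<Rightarrow> 'a \<Rightarrow> real) \<Rightarrow> bool" where
  "weight_fun \<alpha> \<longleftrightarrow> (\<forall>u u'. \<alpha> u u' \<ge> 0) \<and> (\<forall>u u'. \<alpha> u u' = \<alpha> u' u)
     \<and> (\<Sum>u\<in>UNIV. \<Sum>u'\<in>UNIV. \<alpha> u u') = 1"

definition deg :: "('a::finite \<Rightarrow> 'a \<Rightarrow> real) \<Rightarrow> 'a \<Rightarrow> real" where
  "deg \<alpha> u = (\<Sum>u'\<in>UNIV. \<alpha> u u')"

definition fully_supported :: "('a::finite \<Rightarrow> 'a \<Rightarrow> real) \<Rightarrow> bool" where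
  "fully_supported \<alpha> \<longleftrightarrow> (\<forall>u. deg \<alpha> u > 0)"

definition no_self_loops :: "('a \<Rightarrow> 'a \<Rightarrow> real) \<Rightarrow> bool" where
  "no_self_loops \<alpha> \<longleftrightarrow> (\<forall>u. \<not> \<alpha> u u > 0)"

definition has_cycle :: "('a \<Rightarrow> 'a \<Rightarrow> real) \<Rightarrow> bool" where
  "has_cycle \<alpha> \<longleftrightarrow> (\<exists>u. \<alpha> u u > 0) \<or>
     (\<exists>vs. length vs \<ge> 3 \<and> distinct vs \<and>
        (\<forall>i<length vs. \<alpha> (vs ! i) (vs ! ((i + 1) mod length vs)) > 0))"

definition forest :: "('a \<Rightarrow> 'a \<Rightarrow> real) \<Rightarrow> bool" where
  "forest \<alpha> \<longleftrightarrow> \<not> has_cycle \<alpha>"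

definition tensor ::
  "('a \<Rightarrow> 'a \<Rightarrow> real) \<Rightarrow> ('b \<Rightarrow> 'b \<Rightarrow> real) \<Rightarrow> ('a \<times> 'b) \<Rightarrow> ('a \<times> 'b) \<Rightarrow> real" where
  "tensor \<alpha> \<beta> x y = \<alpha> (fst x) (fst y) * \<beta> (snd x) (snd y)"

definition weight_joining ::
  "('a::finite \<Rightarrow> 'a \<Rightarrow> real) \<Rightarrow> ('b::finite \<Rightarrow> 'b \<Rightarrow> real)
     \<Rightarrow> ('a \<times> 'b \<Rightarrow> 'a \<times> 'b \<Rightarrow> real) \<Rightarrow> bool" where
  "weight_joining \<alpha> \<beta> \<gamma> \<longleftrightarrow> weight_fun \<gamma> \<and>
     (\<forall>u. (\<Sum>v\<in>UNIV. deg \<gamma> (u, v)) = deg \<alpha> u) \<and>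
     (\<forall>v. (\<Sum>u\<in>UNIV. deg \<gamma> (u, v)) = deg \<beta> v) \<and>
     (\<forall>u u' v. deg \<alpha> u * (\<Sum>v'\<in>UNIV. \<gamma> (u, v) (u', v')) = \<alpha> u u' * deg \<gamma> (u, v)) \<and>
     (\<forall>u v v'. deg \<beta> v * (\<Sum>u'\<in>UNIV. \<gamma> (u, v) (u', v')) = \<beta> v v' * deg \<gamma> (u, v))"

definition strongly_disjoint ::
  "('a::finite \<Rightarrow> 'a \<Rightarrow> real) \<Rightarrow> ('b::finite \<Rightarrow> 'b \<Rightarrow> real) \<Rightarrow> bool" where
  "strongly_disjoint \<alpha> \<beta> \<longleftrightarrow> (\<forall>\<gamma>. weight_joining \<alpha> \<beta> \<gamma> \<longrightarrow> \<gamma> = tensor \<alpha> \<beta>)"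

definition weakly_disjoint ::
  "('a::finite \<Rightarrow> 'a \<Rightarrow> real) \<Rightarrow> ('b::finite \<Rightarrow> 'b \<Rightarrow> real) \<Rightarrow> bool" where
  "weakly_disjoint \<alpha> \<beta> \<longleftrightarrow> (\<forall>\<gamma>. weight_joining \<alpha> \<beta> \<gamma> \<longrightarrow>
     (\<forall>u v. deg \<gamma> (u, v) = deg \<alpha> u * deg \<beta> v))"

end

theory Submission
  imports Defs
begin

(* If \<alpha> is a forest and \<gamma> is a joining whose degree is deg \<alpha> u * deg \<beta> v, then
   for fixed (v, v') the deviation of \<gamma> from \<alpha> \<otimes> \<beta> is a flow on the edges of \<alpha>
   with zero divergence at every vertex. Following its nonzero values never reaches a dead
   end, which in a finite graph produces a cycle; so on a forest the deviation vanishes and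
   \<gamma> = \<alpha> \<otimes> \<beta>. Conversely, if both graphs are forests they are bipartite, and
   doubling \<alpha> \<otimes> \<beta> on the pairs of vertices of equal colour gives another joining;
   if both contain a cycle, adding a small multiple of the product of the two unit
   circulations around the cycles gives another joining. *)

section \<open>Cycles in finite graphs\<close>

definition is_cycle :: "('a \<Rightarrow> 'a \<Rightarrow> bool) \<Rightarrow> 'a list \<Rightarrow> bool" where
  "is_cycle E vs \<longleftrightarrow> length vs \<ge> 3 \<and> distinct vs \<and>
     (\<forall>i<length vs. E (vs ! i) (vs ! ((i + 1) mod length vs)))"

lemma is_cycle_mono: "is_cycle E vs \<Longrightarrow> (\<And>x y. E x y \<Longrightarrow> F x y) \<Longrightarrow> is_cycle F vs"
  unfolding is_cycle_def by blast

lemma forest_iff_no_cycle: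
  assumes "no_self_loops \<alpha>"
  shows "forest \<alpha> \<longleftrightarrow> \<not> (\<exists>vs. is_cycle (\<lambda>u w. \<alpha> u w > 0) vs)"
  using assms unfolding forest_def has_cycle_def no_self_loops_def is_cycle_def by blast

lemma exists_first_repetition:
  fixes x :: "nat \<Rightarrow> 'a::finite"
  obtains I J where "I < J" "x I = x J" "\<And>i j. i < j \<Longrightarrow> j < J \<Longrightarrow> x i \<noteq> x j"
proof -
  have "\<not> inj x"
    using finite_imageD[of x UNIV] by (auto simp: inj_on_def)
  then have "\<exists>j. \<exists>i<j. x i = x j"
    unfolding inj_def by (metis linorder_neqE_nat)
  define J where "J = (LEAST j. \<exists>i<j. x i = x j)"
  obtain I where "I < J" "x I = x J"
    using LeastI_ex[OF \<open>\<exists>j. \<exists>i<j. x i = x j\<close>] unfolding J_def by blast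
  moreover have "x i \<noteq> x j" if "i < j" "j < J" for i j
    using not_less_Least[of j "\<lambda>j. \<exists>i<j. x i = x j"] that unfolding J_def by blast
  ultimately show ?thesis using that by blast
qed

lemma walk_has_cycle:
  fixes x :: "nat \<Rightarrow> 'a::finite"
  assumes step: "\<And>n. E (x n) (x (Suc n))"
    and no_loop: "\<And>n. x (Suc n) \<noteq> x n"
    and no_backtrack: "\<And>n. x (Suc (Suc n)) \<noteq> x n"
  shows "\<exists>vs. is_cycle E vs"
proof -
  obtain I J where IJ: "I < J" "x I = x J"
    and first_repeat: "\<And>i j. i < j \<Longrightarrow> j < J \<Longrightarrow> x i \<noteq> x j"
    using exists_first_repetition[of x] by blast
  define vs where "vs = map x [I..<J]"
  have len: "length vs = J - I" and nth: "\<And>k. k < J - I \<Longrightarrow> vs ! k = x (I + k)"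
    by (simp_all add: vs_def)
  have "J \<noteq> Suc I" "J \<noteq> Suc (Suc I)"
    using no_loop[of I] no_backtrack[of I] IJ by auto
  then have len3: "J - I \<ge> 3" using IJ by linarith
  have "distinct vs"
    unfolding distinct_conv_nth len
  proof (intro allI impI)
    fix i j assume "i < J - I" "j < J - I" "i \<noteq> j"
    then have "I + i < J" "I + j < J" "I + i \<noteq> I + j" by auto
    then have "x (I + i) \<noteq> x (I + j)" by (metis first_repeat linorder_neqE_nat)
    then show "vs ! i \<noteq> vs ! j" using nth \<open>i < J - I\<close> \<open>j < J - I\<close> by simp
  qed
  moreover have "vs ! ((k + 1) mod length vs) = x (I + Suc k)" if "k < length vs" for k
  proof (cases "k + 1 < J - I")
    case True
    then show ?thesis using nth len by simp
  next
    case False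
    then have "k + 1 = J - I" using that len by simp
    then show ?thesis using nth[of 0] len3 len IJ by simp
  qed
  ultimately have "is_cycle E vs"
    unfolding is_cycle_def using len len3 nth step by simp
  then show ?thesis by blast
qed

lemma cycle_if_no_dead_end:
  fixes E :: "'a::finite \<Rightarrow> 'a \<Rightarrow> bool"
  assumes irrefl: "\<And>x. \<not> E x x"
    and no_dead_end: "\<And>x y. E y x \<Longrightarrow> \<exists>z. E x z \<and> z \<noteq> y"
    and "E a b"
  shows "\<exists>vs. is_cycle E vs"
proof -
  obtain f :: "nat \<Rightarrow> 'a \<times> 'a" where f: "\<And>n. E (fst (f n)) (snd (f n))"
    "\<And>n. fst (f (Suc n)) = snd (f n)" "\<And>n. snd (f (Suc n)) \<noteq> fst (f n)"
    using dependent_nat_choice[of "\<lambda>_ p. E (fst p) (snd p)"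
        "\<lambda>_ p p'. fst p' = snd p \<and> snd p' \<noteq> fst p"] \<open>E a b\<close> no_dead_end
    by fastforce
  show ?thesis
  proof (rule walk_has_cycle)
    show "E (fst (f n)) (fst (f (Suc n)))" for n using f by simp
    then show "fst (f (Suc n)) \<noteq> fst (f n)" for n using irrefl by metis
    show "fst (f (Suc (Suc n))) \<noteq> fst (f n)" for n using f by simp
  qed
qed

lemma bipartite_if_no_cycle:
  fixes E :: "'a::finite \<Rightarrow> 'a \<Rightarrow> bool"
  assumes "\<And>x. \<not> E x x" and "\<And>x y. E x y \<Longrightarrow> E y x" and "\<not> (\<exists>vs. is_cycle E vs)"
  shows "\<exists>c::'a \<Rightarrow> bool. \<forall>x y. E x y \<longrightarrow> c x \<noteq> c y"
  using assms
proof (induction "card {(x, y). E x y}" arbitrary: E rule: less_induct)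
  case less
  show ?case
  proof (cases "\<exists>a b. E a b")
    case False
    then show ?thesis by blast
  next
    case True
    then obtain x y where xy: "E x y" and leaf: "\<And>z. E x z \<Longrightarrow> z = y"
      using cycle_if_no_dead_end[of E] less.prems by metis
    define E' where "E' u w \<longleftrightarrow> E u w \<and> {u, w} \<noteq> {x, y}" for u w
    have "{(u, w). E' u w} \<subset> {(u, w). E u w}"
      using xy unfolding E'_def by auto
    then have "card {(u, w). E' u w} < card {(u, w). E u w}"
      by (simp add: psubset_card_mono)
    moreover have "\<And>u. \<not> E' u u" and "\<And>u w. E' u w \<Longrightarrow> E' w u"
      using less.prems(1,2) unfolding E'_def by (auto simp: insert_commute)
    moreover have "\<not> (\<exists>vs. is_cycle E' vs)"
      using less.prems(3) is_cycle_mono[of E' _ E] unfolding E'_def by blast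
    ultimately obtain c :: "'a \<Rightarrow> bool" where c: "\<forall>u w. E' u w \<longrightarrow> c u \<noteq> c w"
      using less.hyps[of E'] by blast
    have "y \<noteq> x" using xy less.prems(1) by blast
    have "(c(x := \<not> c y)) u \<noteq> (c(x := \<not> c y)) w" if "E u w" for u w
    proof (cases "u = x \<or> w = x")
      case True
      then have "(u = x \<and> w = y) \<or> (u = y \<and> w = x)" using that leaf less.prems(2) by blast
      then show ?thesis using \<open>y \<noteq> x\<close> by auto
    next
      case False
      then have "E' u w" using that unfolding E'_def by (auto simp: doubleton_eq_iff)
      then show ?thesis using c False by auto
    qed
    then show ?thesis by blast
  qed
qed

lemma acyclic_divergence_free_eq_0:
  fixes E :: "'a::finite \<Rightarrow> 'a \<Rightarrow> bool" and D :: "'a \<Rightarrow> 'a \<Rightarrow> 'c \<Rightarrow> real"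
  assumes irrefl: "\<And>x. \<not> E x x" and acyclic: "\<not> (\<exists>vs. is_cycle E vs)"
    and support: "\<And>u w c. D u w c \<noteq> 0 \<Longrightarrow> E u w"
    and reverse: "\<And>u w c. D u w c \<noteq> 0 \<Longrightarrow> \<exists>c'. D w u c' \<noteq> 0"
    and divergence_free: "\<And>u c. (\<Sum>w\<in>UNIV. D u w c) = 0"
  shows "D u w c = 0"
proof (rule ccontr)
  assume "D u w c \<noteq> 0"
  define F where "F u w \<longleftrightarrow> (\<exists>c. D u w c \<noteq> 0)" for u w
  have "\<exists>z. F x z \<and> z \<noteq> y" if yx: "F y x" for x y
  proof -
    obtain c where c: "D x y c \<noteq> 0" using yx reverse unfolding F_def by blast
    have "(\<Sum>z\<in>UNIV. D x z c) = D x y c + (\<Sum>z\<in>UNIV - {y}. D x z c)"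
      by (simp add: sum.remove)
    then have "\<exists>z\<in>UNIV - {y}. D x z c \<noteq> 0"
      using c divergence_free by (metis add.right_neutral sum.neutral)
    then show ?thesis unfolding F_def by blast
  qed
  moreover have "\<And>x. \<not> F x x" using irrefl support unfolding F_def by blast
  ultimately obtain vs where "is_cycle F vs"
    using cycle_if_no_dead_end[of F u w] \<open>D u w c \<noteq> 0\<close> unfolding F_def by blast
  then have "is_cycle E vs" by (rule is_cycle_mono) (auto simp: F_def intro: support)
  then show False using acyclic by blast
qed

section \<open>Weight functions and joinings\<close>

lemma sum_UNIV_prod:
  "(\<Sum>x\<in>(UNIV :: ('a::finite \<times> 'b::finite) set). f x) = (\<Sum>u\<in>UNIV. \<Sum>v\<in>UNIV. f (u, v))"
  by (simp add: sum.cartesian_product UNIV_Times_UNIV[symmetric] del: UNIV_Times_UNIV)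

lemma weight_fun_nonneg: "weight_fun \<alpha> \<Longrightarrow> \<alpha> u w \<ge> 0"
  by (simp add: weight_fun_def)

lemma weight_fun_sym: "weight_fun \<alpha> \<Longrightarrow> \<alpha> u w = \<alpha> w u"
  by (simp add: weight_fun_def)

lemma weight_fun_sum_deg: "weight_fun \<alpha> \<Longrightarrow> (\<Sum>u\<in>UNIV. deg \<alpha> u) = 1"
  by (simp add: weight_fun_def deg_def)

lemma weight_fun_has_edge:
  fixes \<alpha> :: "'a::finite \<Rightarrow> 'a \<Rightarrow> real"
  assumes "weight_fun \<alpha>"
  shows "\<exists>u w. \<alpha> u w > 0"
proof (rule ccontr)
  assume "\<not> ?thesis"
  then have "\<alpha> u w = 0" for u w
    using weight_fun_nonneg[OF assms, of u w] by (meson not_less order_antisym)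
  then show False using assms by (simp add: weight_fun_def)
qed

lemma deg_tensor: "deg (tensor \<alpha> \<beta>) (u, v) = deg \<alpha> u * deg \<beta> v"
  unfolding deg_def tensor_def by (simp add: sum_UNIV_prod sum_product)

lemma weakly_disjoint_if_strongly_disjoint:
  "strongly_disjoint \<alpha> \<beta> \<Longrightarrow> weakly_disjoint \<alpha> \<beta>"
  unfolding strongly_disjoint_def weakly_disjoint_def by (auto simp: deg_tensor)

definition swap_weights :: "('a \<times> 'b \<Rightarrow> 'a \<times> 'b \<Rightarrow> real) \<Rightarrow> 'b \<times> 'a \<Rightarrow> 'b \<times> 'a \<Rightarrow> real" where
  "swap_weights \<gamma> x y = \<gamma> (prod.swap x) (prod.swap y)"

lemma swap_weights_swap_weights [simp]: "swap_weights (swap_weights \<gamma>) = \<gamma>"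
  by (simp add: swap_weights_def fun_eq_iff)

lemma swap_weights_tensor: "swap_weights (tensor \<alpha> \<beta>) = tensor \<beta> \<alpha>"
  by (simp add: swap_weights_def tensor_def fun_eq_iff)

lemma sum_UNIV_swap: "(\<Sum>x\<in>UNIV. f (prod.swap x)) = (\<Sum>x\<in>UNIV. f x)"
  by (rule sum.reindex_bij_betw[OF bij_swap])

lemma deg_swap_weights: "deg (swap_weights \<gamma>) x = deg \<gamma> (prod.swap x)"
  unfolding deg_def swap_weights_def by (rule sum_UNIV_swap)

lemma weight_joining_swap:
  fixes \<alpha> :: "'a::finite \<Rightarrow> 'a \<Rightarrow> real" and \<beta> :: "'b::finite \<Rightarrow> 'b \<Rightarrow> real"
  assumes "weight_joining \<alpha> \<beta> \<gamma>"
  shows "weight_joining \<beta> \<alpha> (swap_weights \<gamma>)"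
proof -
  have "weight_fun \<gamma>" using assms by (simp add: weight_joining_def)
  moreover have "(\<Sum>x\<in>UNIV. deg (swap_weights \<gamma>) x) = (\<Sum>x\<in>UNIV. deg \<gamma> x)"
    unfolding deg_swap_weights by (rule sum_UNIV_swap)
  ultimately have "weight_fun (swap_weights \<gamma>)"
    unfolding weight_fun_def by (simp add: deg_def swap_weights_def)
  then show ?thesis
    using assms unfolding weight_joining_def
    by (simp add: deg_swap_weights) (simp add: swap_weights_def)
qed

lemma strongly_disjoint_sym:
  fixes \<alpha> :: "'a::finite \<Rightarrow> 'a \<Rightarrow> real" and \<beta> :: "'b::finite \<Rightarrow> 'b \<Rightarrow> real"
  assumes "strongly_disjoint \<alpha> \<beta>"
  shows "strongly_disjoint \<beta> \<alpha>"
  unfolding strongly_disjoint_def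
proof (intro allI impI)
  fix \<gamma> assume "weight_joining \<beta> \<alpha> \<gamma>"
  then have "swap_weights \<gamma> = tensor \<alpha> \<beta>"
    using assms weight_joining_swap unfolding strongly_disjoint_def by blast
  then show "\<gamma> = tensor \<beta> \<alpha>"
    by (metis swap_weights_swap_weights swap_weights_tensor)
qed

lemma weakly_disjoint_sym:
  fixes \<alpha> :: "'a::finite \<Rightarrow> 'a \<Rightarrow> real" and \<beta> :: "'b::finite \<Rightarrow> 'b \<Rightarrow> real"
  assumes "weakly_disjoint \<alpha> \<beta>"
  shows "weakly_disjoint \<beta> \<alpha>"
  unfolding weakly_disjoint_def
proof (intro allI impI)
  fix \<gamma> v u assume "weight_joining \<beta> \<alpha> \<gamma>"
  then have "deg (swap_weights \<gamma>) (u, v) = deg \<alpha> u * deg \<beta> v"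
    using assms weight_joining_swap unfolding weakly_disjoint_def by blast
  then show "deg \<gamma> (v, u) = deg \<beta> v * deg \<alpha> u"
    by (simp add: deg_swap_weights mult.commute)
qed

lemma weight_joining_eq_0_if_not_edge:
  fixes \<alpha> :: "'a::finite \<Rightarrow> 'a \<Rightarrow> real" and \<beta> :: "'b::finite \<Rightarrow> 'b \<Rightarrow> real"
  assumes "fully_supported \<alpha>" and joining: "weight_joining \<alpha> \<beta> \<gamma>" and "\<alpha> u u' = 0"
  shows "\<gamma> (u, v) (u', v') = 0"
proof -
  have "weight_fun \<gamma>" using joining by (simp add: weight_joining_def)
  have "deg \<alpha> u * (\<Sum>v'\<in>UNIV. \<gamma> (u, v) (u', v')) = 0"
    using joining \<open>\<alpha> u u' = 0\<close> unfolding weight_joining_def by simp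
  then have "(\<Sum>v'\<in>UNIV. \<gamma> (u, v) (u', v')) = 0"
    using assms(1) unfolding fully_supported_def by (metis less_irrefl mult_eq_0_iff)
  then show ?thesis
    using sum_nonneg_eq_0_iff[of UNIV "\<lambda>v'. \<gamma> (u, v) (u', v')"]
      weight_fun_nonneg[OF \<open>weight_fun \<gamma>\<close>] by simp
qed

lemma weight_joining_partial_sum:
  fixes \<alpha> :: "'a::finite \<Rightarrow> 'a \<Rightarrow> real" and \<beta> :: "'b::finite \<Rightarrow> 'b \<Rightarrow> real"
  assumes "fully_supported \<beta>" and joining: "weight_joining \<alpha> \<beta> \<gamma>"
    and product_deg: "deg \<gamma> (u, v) = deg \<alpha> u * deg \<beta> v"
  shows "(\<Sum>u'\<in>UNIV. \<gamma> (u, v) (u', v')) = deg \<alpha> u * \<beta> v v'"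
proof -
  have "deg \<beta> v > 0"
    using assms(1) by (simp add: fully_supported_def)
  moreover have "deg \<beta> v * (\<Sum>u'\<in>UNIV. \<gamma> (u, v) (u', v')) = deg \<beta> v * (deg \<alpha> u * \<beta> v v')"
    using joining product_deg unfolding weight_joining_def by (simp add: mult_ac)
  ultimately show ?thesis by simp
qed

section \<open>Joinings of forests\<close>

lemma strongly_disjoint_if_forest:
  fixes \<alpha> :: "'a::finite \<Rightarrow> 'a \<Rightarrow> real" and \<beta> :: "'b::finite \<Rightarrow> 'b \<Rightarrow> real"
  assumes \<alpha>: "weight_fun \<alpha>" and \<beta>: "weight_fun \<beta>"
    and supp: "fully_supported \<alpha>" "fully_supported \<beta>"
    and "no_self_loops \<alpha>" and "forest \<alpha>" and weak: "weakly_disjoint \<alpha> \<beta>"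
  shows "strongly_disjoint \<alpha> \<beta>"
  unfolding strongly_disjoint_def
proof (intro allI impI)
  fix \<gamma> assume joining: "weight_joining \<alpha> \<beta> \<gamma>"
  have \<gamma>: "weight_fun \<gamma>" using joining by (simp add: weight_joining_def)
  have sum_u': "(\<Sum>u'\<in>UNIV. \<gamma> (u, v) (u', v')) = deg \<alpha> u * \<beta> v v'" for u v v'
    using weight_joining_partial_sum[OF supp(2) joining] weak joining
    unfolding weakly_disjoint_def by blast
  define D where "D u u' c = \<gamma> (u, fst c) (u', snd c) - \<alpha> u u' * \<beta> (fst c) (snd c)"
    for u u' and c :: "'b \<times> 'b"
  have D_eq_0: "D u u' c = 0" for u u' c
  proof (rule acyclic_divergence_free_eq_0[where E = "\<lambda>u u'. \<alpha> u u' > 0" and D = D])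
    show "\<And>u. \<not> \<alpha> u u > 0" "\<not> (\<exists>vs. is_cycle (\<lambda>u u'. \<alpha> u u' > 0) vs)"
      using assms(5,6) forest_iff_no_cycle[of \<alpha>] by (auto simp: no_self_loops_def)
  next
    fix u u' c assume "D u u' c \<noteq> 0"
    then show "\<alpha> u u' > 0"
      using weight_joining_eq_0_if_not_edge[OF supp(1) joining, of u u']
        weight_fun_nonneg[OF \<alpha>, of u u'] by (force simp: D_def)
  next
    fix u u' c assume "D u u' c \<noteq> 0"
    moreover have "D u' u (prod.swap c) = D u u' c"
      unfolding D_def using weight_fun_sym[OF \<gamma>, of "(u, fst c)" "(u', snd c)"]
        weight_fun_sym[OF \<alpha>, of u u'] weight_fun_sym[OF \<beta>, of "fst c" "snd c"] by simp
    ultimately show "\<exists>c'. D u' u c' \<noteq> 0" by metis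
  next
    fix u c
    have "(\<Sum>u'\<in>UNIV. D u u' c)
        = (\<Sum>u'\<in>UNIV. \<gamma> (u, fst c) (u', snd c)) - deg \<alpha> u * \<beta> (fst c) (snd c)"
      by (simp add: D_def sum_subtractf deg_def sum_distrib_right)
    then show "(\<Sum>u'\<in>UNIV. D u u' c) = 0" using sum_u' by simp
  qed
  show "\<gamma> = tensor \<alpha> \<beta>"
  proof (intro ext)
    fix x y :: "'a \<times> 'b"
    show "\<gamma> x y = tensor \<alpha> \<beta> x y"
      using D_eq_0[of "fst x" "fst y" "(snd x, snd y)"] by (simp add: D_def tensor_def)
  qed
qed

lemma colour_class_deg_eq_half:
  fixes \<beta> :: "'b::finite \<Rightarrow> 'b \<Rightarrow> real" and d :: "'b \<Rightarrow> bool"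
  assumes \<beta>: "weight_fun \<beta>" and proper: "\<And>v w. \<beta> v w > 0 \<Longrightarrow> d v \<noteq> d w"
  shows "(\<Sum>v\<in>UNIV. if d v = b then deg \<beta> v else 0) = 1 / 2"
proof -
  define A where "A b = (\<Sum>v\<in>UNIV. if d v = b then deg \<beta> v else 0)" for b
  have A_double_sum: "A b = (\<Sum>v\<in>UNIV. \<Sum>w\<in>UNIV. if d v = b then \<beta> v w else 0)" for b
    unfolding A_def deg_def by (intro sum.cong) auto
  have cross: "(if d v = b then \<beta> v w else 0) = (if d w = (\<not> b) then \<beta> v w else 0)" for v w b
    using proper[of v w] weight_fun_nonneg[OF \<beta>, of v w] by (cases "\<beta> v w > 0") auto
  have "A b = (\<Sum>v\<in>UNIV. \<Sum>w\<in>UNIV. if d w = (\<not> b) then \<beta> v w else 0)"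
    unfolding A_double_sum cross ..
  also have "\<dots> = (\<Sum>w\<in>UNIV. \<Sum>v\<in>UNIV. if d w = (\<not> b) then \<beta> w v else 0)"
    by (subst sum.swap) (intro sum.cong refl, metis weight_fun_sym[OF \<beta>])
  also have "\<dots> = A (\<not> b)"
    unfolding A_double_sum ..
  finally have "A b = A (\<not> b)" .
  moreover have "A b + A (\<not> b) = (\<Sum>v\<in>UNIV. deg \<beta> v)"
    unfolding A_def sum.distrib[symmetric] by (intro sum.cong) auto
  ultimately show ?thesis
    using weight_fun_sum_deg[OF \<beta>] unfolding A_def by simp
qed

definition colour_matched ::
  "('a \<Rightarrow> bool) \<Rightarrow> ('b \<Rightarrow> bool) \<Rightarrow> ('a \<Rightarrow> 'a \<Rightarrow> real) \<Rightarrow> ('b \<Rightarrow> 'b \<Rightarrow> real)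
     \<Rightarrow> 'a \<times> 'b \<Rightarrow> 'a \<times> 'b \<Rightarrow> real" where
  "colour_matched c d \<alpha> \<beta> x y = (if c (fst x) = d (snd x) then 2 * tensor \<alpha> \<beta> x y else 0)"

lemma colour_matched_partial_sums:
  fixes \<alpha> :: "'a::finite \<Rightarrow> 'a \<Rightarrow> real" and \<beta> :: "'b::finite \<Rightarrow> 'b \<Rightarrow> real"
  shows "(\<Sum>v'\<in>UNIV. colour_matched c d \<alpha> \<beta> (u, v) (u', v'))
      = (if c u = d v then 2 * \<alpha> u u' * deg \<beta> v else 0)"
    and "(\<Sum>u'\<in>UNIV. colour_matched c d \<alpha> \<beta> (u, v) (u', v'))
      = (if c u = d v then 2 * deg \<alpha> u * \<beta> v v' else 0)"
  by (simp_all add: colour_matched_def tensor_def deg_def sum_distrib_left sum_distrib_right mult_ac)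

lemma deg_colour_matched:
  fixes \<alpha> :: "'a::finite \<Rightarrow> 'a \<Rightarrow> real" and \<beta> :: "'b::finite \<Rightarrow> 'b \<Rightarrow> real"
  shows "deg (colour_matched c d \<alpha> \<beta>) (u, v) = (if c u = d v then 2 * deg \<alpha> u * deg \<beta> v else 0)"
  unfolding deg_def[of "colour_matched c d \<alpha> \<beta>"] sum_UNIV_prod colour_matched_partial_sums
  by (cases "c u = d v") (simp_all add: deg_def[of \<alpha>] sum_distrib_left sum_distrib_right)

lemma colour_matched_sym:
  assumes \<alpha>: "weight_fun \<alpha>" and \<beta>: "weight_fun \<beta>"
    and c: "\<And>u u'. \<alpha> u u' > 0 \<Longrightarrow> c u \<noteq> c u'"
    and d: "\<And>v v'. \<beta> v v' > 0 \<Longrightarrow> d v \<noteq> d v'"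
  shows "colour_matched c d \<alpha> \<beta> x y = colour_matched c d \<alpha> \<beta> y x"
proof (cases "\<alpha> (fst x) (fst y) > 0 \<and> \<beta> (snd x) (snd y) > 0")
  case True
  then have "(c (fst x) = d (snd x)) = (c (fst y) = d (snd y))"
    using c d by blast
  then show ?thesis
    using weight_fun_sym[OF \<alpha>] weight_fun_sym[OF \<beta>] by (simp add: colour_matched_def tensor_def)
next
  case False
  then have "tensor \<alpha> \<beta> x y = 0" "tensor \<alpha> \<beta> y x = 0"
    using weight_fun_nonneg[OF \<alpha>] weight_fun_nonneg[OF \<beta>] weight_fun_sym[OF \<alpha>] weight_fun_sym[OF \<beta>]
    by (auto simp: tensor_def not_less order.antisym)
  then show ?thesis by (simp add: colour_matched_def)
qed

lemma weight_joining_colour_matched: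
  fixes \<alpha> :: "'a::finite \<Rightarrow> 'a \<Rightarrow> real" and \<beta> :: "'b::finite \<Rightarrow> 'b \<Rightarrow> real"
  assumes \<alpha>: "weight_fun \<alpha>" and \<beta>: "weight_fun \<beta>"
    and c: "\<And>u u'. \<alpha> u u' > 0 \<Longrightarrow> c u \<noteq> c u'"
    and d: "\<And>v v'. \<beta> v v' > 0 \<Longrightarrow> d v \<noteq> d v'"
  shows "weight_joining \<alpha> \<beta> (colour_matched c d \<alpha> \<beta>)"
proof -
  have marginal_\<alpha>: "(\<Sum>v\<in>UNIV. deg (colour_matched c d \<alpha> \<beta>) (u, v)) = deg \<alpha> u" for u
  proof -
    have "(\<Sum>v\<in>UNIV. deg (colour_matched c d \<alpha> \<beta>) (u, v))
        = 2 * deg \<alpha> u * (\<Sum>v\<in>UNIV. if d v = c u then deg \<beta> v else 0)"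
      unfolding deg_colour_matched sum_distrib_left by (intro sum.cong) auto
    then show ?thesis using colour_class_deg_eq_half[OF \<beta> d] by simp
  qed
  have marginal_\<beta>: "(\<Sum>u\<in>UNIV. deg (colour_matched c d \<alpha> \<beta>) (u, v)) = deg \<beta> v" for v
  proof -
    have "(\<Sum>u\<in>UNIV. deg (colour_matched c d \<alpha> \<beta>) (u, v))
        = 2 * deg \<beta> v * (\<Sum>u\<in>UNIV. if c u = d v then deg \<alpha> u else 0)"
      unfolding deg_colour_matched sum_distrib_left by (intro sum.cong) auto
    then show ?thesis using colour_class_deg_eq_half[OF \<alpha> c] by simp
  qed
  have "(\<Sum>x\<in>UNIV. \<Sum>y\<in>UNIV. colour_matched c d \<alpha> \<beta> x y)
      = (\<Sum>u\<in>UNIV. \<Sum>v\<in>UNIV. deg (colour_matched c d \<alpha> \<beta>) (u, v))"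
    by (simp only: deg_def sum_UNIV_prod)
  also have "\<dots> = 1"
    using weight_fun_sum_deg[OF \<alpha>] by (simp add: marginal_\<alpha>)
  finally have "weight_fun (colour_matched c d \<alpha> \<beta>)"
    unfolding weight_fun_def using colour_matched_sym[where c = c and d = d, OF \<alpha> \<beta> c d]
      weight_fun_nonneg[OF \<alpha>] weight_fun_nonneg[OF \<beta>] by (simp add: colour_matched_def tensor_def)
  then show ?thesis
    unfolding weight_joining_def colour_matched_partial_sums
    using marginal_\<alpha> marginal_\<beta> by (simp add: deg_colour_matched)
qed

lemma not_strongly_disjoint_if_forests:
  fixes \<alpha> :: "'a::finite \<Rightarrow> 'a \<Rightarrow> real" and \<beta> :: "'b::finite \<Rightarrow> 'b \<Rightarrow> real"
  assumes \<alpha>: "weight_fun \<alpha>" and \<beta>: "weight_fun \<beta>"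
    and "no_self_loops \<alpha>" "no_self_loops \<beta>" and "forest \<alpha>" "forest \<beta>"
  shows "\<not> strongly_disjoint \<alpha> \<beta>"
proof
  assume strong: "strongly_disjoint \<alpha> \<beta>"
  obtain c :: "'a \<Rightarrow> bool" where c: "\<And>u u'. \<alpha> u u' > 0 \<Longrightarrow> c u \<noteq> c u'"
    using bipartite_if_no_cycle[of "\<lambda>u u'. \<alpha> u u' > 0"] assms(3,5) forest_iff_no_cycle[of \<alpha>]
      weight_fun_sym[OF \<alpha>] by (auto simp: no_self_loops_def)
  obtain d :: "'b \<Rightarrow> bool" where d: "\<And>v v'. \<beta> v v' > 0 \<Longrightarrow> d v \<noteq> d v'"
    using bipartite_if_no_cycle[of "\<lambda>v v'. \<beta> v v' > 0"] assms(4,6) forest_iff_no_cycle[of \<beta>]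
      weight_fun_sym[OF \<beta>] by (auto simp: no_self_loops_def)
  have "weight_joining \<alpha> \<beta> (colour_matched c d \<alpha> \<beta>)"
    by (rule weight_joining_colour_matched[where c = c and d = d, OF \<alpha> \<beta> c d])
  then have matched_eq: "colour_matched c d \<alpha> \<beta> = tensor \<alpha> \<beta>"
    using strong unfolding strongly_disjoint_def by blast
  obtain u u' v v' where "\<alpha> u u' > 0" "\<beta> v v' > 0"
    using weight_fun_has_edge[OF \<alpha>] weight_fun_has_edge[OF \<beta>] by blast
  moreover have "\<alpha> u' u > 0" using \<open>\<alpha> u u' > 0\<close> weight_fun_sym[OF \<alpha>] by simp
  moreover have "c u \<noteq> d v \<or> c u' \<noteq> d v" using c \<open>\<alpha> u u' > 0\<close> by blast
  ultimately have "colour_matched c d \<alpha> \<beta> (u, v) (u', v') \<noteq> tensor \<alpha> \<beta> (u, v) (u', v')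
      \<or> colour_matched c d \<alpha> \<beta> (u', v) (u, v') \<noteq> tensor \<alpha> \<beta> (u', v) (u, v')"
    by (auto simp: colour_matched_def tensor_def)
  then show False using matched_eq by simp
qed

section \<open>Circulations around cycles\<close>

lemma sum_lessThan_rotate:
  fixes n :: nat
  shows "(\<Sum>i<n. g ((i + 1) mod n)) = (\<Sum>i<n. g i)"
proof (cases n)
  case (Suc m)
  have "(\<Sum>i<Suc m. g ((i + 1) mod Suc m)) = (\<Sum>i<m. g (Suc i)) + g 0"
    by simp
  also have "\<dots> = (\<Sum>i<Suc m. g i)"
    by (simp only: sum.lessThan_Suc_shift add.commute)
  finally show ?thesis using Suc by simp
qed simp

definition edge_count :: "'a list \<Rightarrow> 'a \<Rightarrow> 'a \<Rightarrow> real" where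
  "edge_count vs u w =
     (\<Sum>i<length vs. of_bool (vs ! i = u) * of_bool (vs ! ((i + 1) mod length vs) = w))"

definition circulation :: "'a list \<Rightarrow> 'a \<Rightarrow> 'a \<Rightarrow> real" where
  "circulation vs u w = edge_count vs u w - edge_count vs w u"

lemma sum_UNIV_of_bool_eq:
  fixes a :: "'a::finite"
  shows "(\<Sum>w\<in>UNIV. of_bool (a = w) :: real) = 1"
  by simp

lemma sum_edge_count_out:
  fixes vs :: "'a::finite list"
  shows "(\<Sum>w\<in>UNIV. edge_count vs u w) = (\<Sum>i<length vs. of_bool (vs ! i = u))"
  unfolding edge_count_def
  by (subst sum.swap) (simp only: sum_distrib_left[symmetric] sum_UNIV_of_bool_eq mult_1_right)

lemma sum_edge_count_in:
  fixes vs :: "'a::finite list"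
  shows "(\<Sum>w\<in>UNIV. edge_count vs w u) = (\<Sum>i<length vs. of_bool (vs ! i = u))"
  unfolding edge_count_def
  by (subst sum.swap) (simp only: sum_distrib_right[symmetric] sum_UNIV_of_bool_eq mult_1_left
      sum_lessThan_rotate[of "\<lambda>i. of_bool (vs ! i = u)"])

lemma circulation_antisym: "circulation vs w u = - circulation vs u w"
  by (simp add: circulation_def)

lemma sum_circulation: "(\<Sum>w\<in>UNIV. circulation (vs :: 'a::finite list) u w) = 0"
  by (simp add: circulation_def sum_subtractf sum_edge_count_out sum_edge_count_in)

lemma circulation_support:
  assumes "is_cycle E vs" and "circulation vs u w \<noteq> 0"
  shows "E u w \<or> E w u"
proof -
  have "edge_count vs u w \<noteq> 0 \<or> edge_count vs w u \<noteq> 0"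
    using assms(2) by (auto simp: circulation_def)
  then have "\<exists>i<length vs. (vs ! i = u \<and> vs ! ((i + 1) mod length vs) = w)
      \<or> (vs ! i = w \<and> vs ! ((i + 1) mod length vs) = u)"
    unfolding edge_count_def by (auto elim!: sum.not_neutral_contains_not_neutral)
  then show ?thesis using assms(1) unfolding is_cycle_def by blast
qed

lemma circulation_first_edge:
  assumes "is_cycle E vs"
  shows "circulation vs (vs ! 0) (vs ! 1) = 1"
proof -
  have len: "length vs \<ge> 3" and dist: "distinct vs"
    using assms by (auto simp: is_cycle_def)
  have idx: "vs ! i = vs ! j \<longleftrightarrow> i = j" if "i < length vs" "j < length vs" for i j
    using nth_eq_iff_index_eq[OF dist that] .
  have small: "vs \<noteq> []" "Suc 0 mod length vs = Suc 0" "Suc (Suc 0) mod length vs = Suc (Suc 0)"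
    using len by auto
  have "edge_count vs (vs ! 0) (vs ! 1) = (\<Sum>i<length vs. if i = 0 then 1 else 0)"
    unfolding edge_count_def
  proof (intro sum.cong)
    fix i assume "i \<in> {..<length vs}"
    then show "of_bool (vs ! i = vs ! 0) * of_bool (vs ! ((i + 1) mod length vs) = vs ! 1)
        = (if i = 0 then 1 else 0 :: real)"
      using len by (cases "i = 0") (auto simp: idx small)
  qed simp
  moreover have "edge_count vs (vs ! 1) (vs ! 0) = 0"
    unfolding edge_count_def
  proof (intro sum.neutral ballI)
    fix i assume "i \<in> {..<length vs}"
    then show "of_bool (vs ! i = vs ! 1) * of_bool (vs ! ((i + 1) mod length vs) = vs ! 0) = (0 :: real)"
      using len by (cases "i = 1") (auto simp: idx small)
  qed
  ultimately show ?thesis using small(1) by (simp add: circulation_def)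
qed

lemma circulation_pos_if_nonzero:
  assumes "weight_fun \<alpha>" and "is_cycle (\<lambda>u u'. \<alpha> u u' > 0) vs" and "circulation vs u u' \<noteq> 0"
  shows "\<alpha> u u' > 0"
  using circulation_support[OF assms(2,3)] weight_fun_sym[OF assms(1), of u u'] by auto

lemma weight_joining_tensor_add:
  fixes \<alpha> :: "'a::finite \<Rightarrow> 'a \<Rightarrow> real" and \<beta> :: "'b::finite \<Rightarrow> 'b \<Rightarrow> real"
  assumes \<alpha>: "weight_fun \<alpha>" and \<beta>: "weight_fun \<beta>"
    and nonneg: "\<And>x y. tensor \<alpha> \<beta> x y + \<delta> x y \<ge> 0"
    and \<delta>_sym: "\<And>x y. \<delta> x y = \<delta> y x"
    and sum_v': "\<And>u v u'. (\<Sum>v'\<in>UNIV. \<delta> (u, v) (u', v')) = 0"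
    and sum_u': "\<And>u v v'. (\<Sum>u'\<in>UNIV. \<delta> (u, v) (u', v')) = 0"
  shows "weight_joining \<alpha> \<beta> (\<lambda>x y. tensor \<alpha> \<beta> x y + \<delta> x y)"
    (is "weight_joining \<alpha> \<beta> ?\<gamma>")
proof -
  have \<gamma>_v': "(\<Sum>v'\<in>UNIV. ?\<gamma> (u, v) (u', v')) = \<alpha> u u' * deg \<beta> v" for u v u'
    using sum_v' by (simp add: sum.distrib tensor_def deg_def sum_distrib_left)
  have \<gamma>_u': "(\<Sum>u'\<in>UNIV. ?\<gamma> (u, v) (u', v')) = deg \<alpha> u * \<beta> v v'" for u v v'
    using sum_u' by (simp add: sum.distrib tensor_def deg_def sum_distrib_right)
  have deg_\<gamma>: "deg ?\<gamma> (u, v) = deg \<alpha> u * deg \<beta> v" for u v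
    unfolding deg_def[of ?\<gamma>] sum_UNIV_prod \<gamma>_v' by (simp add: deg_def sum_distrib_right)
  have "weight_fun ?\<gamma>"
    unfolding weight_fun_def
  proof (intro conjI allI)
    show "?\<gamma> x y \<ge> 0" "?\<gamma> x y = ?\<gamma> y x" for x y
      using nonneg \<delta>_sym weight_fun_sym[OF \<alpha>] weight_fun_sym[OF \<beta>] by (simp_all add: tensor_def)
    have "(\<Sum>x\<in>UNIV. \<Sum>y\<in>UNIV. ?\<gamma> x y) = (\<Sum>u\<in>UNIV. \<Sum>v\<in>UNIV. deg ?\<gamma> (u, v))"
      by (simp only: deg_def sum_UNIV_prod)
    also have "\<dots> = 1"
      using weight_fun_sum_deg[OF \<alpha>] weight_fun_sum_deg[OF \<beta>]
      by (simp add: deg_\<gamma> sum_product[symmetric])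
    finally show "(\<Sum>x\<in>UNIV. \<Sum>y\<in>UNIV. ?\<gamma> x y) = 1" .
  qed
  then show ?thesis
    unfolding weight_joining_def \<gamma>_v' \<gamma>_u' deg_\<gamma>
    using weight_fun_sum_deg[OF \<alpha>] weight_fun_sum_deg[OF \<beta>]
    by (simp add: sum_distrib_left[symmetric] sum_distrib_right[symmetric])
qed

lemma exists_pos_add_mult_nonneg:
  fixes f g :: "'a::finite \<Rightarrow> real"
  assumes f: "\<And>x. f x \<ge> 0" and support: "\<And>x. g x \<noteq> 0 \<Longrightarrow> f x > 0"
  shows "\<exists>\<epsilon>>0. \<forall>x. f x + \<epsilon> * g x \<ge> 0"
proof -
  \<comment> \<open>The element 1 only keeps the set nonempty when g vanishes identically.\<close>
  define \<epsilon> where "\<epsilon> = Min (insert 1 ((\<lambda>x. f x / \<bar>g x\<bar>) ` {x. g x \<noteq> 0}))"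
  have "\<epsilon> > 0" using support by (simp add: \<epsilon>_def)
  moreover have "f x + \<epsilon> * g x \<ge> 0" for x
  proof (cases "g x = 0")
    case False
    then have "\<epsilon> \<le> f x / \<bar>g x\<bar>" by (simp add: \<epsilon>_def)
    then have "\<epsilon> * \<bar>g x\<bar> \<le> f x" using False by (simp add: pos_le_divide_eq)
    moreover have "- (\<epsilon> * \<bar>g x\<bar>) \<le> \<epsilon> * g x" using \<open>\<epsilon> > 0\<close> by (simp add: abs_if)
    ultimately show ?thesis by linarith
  qed (simp add: f)
  ultimately show ?thesis by blast
qed

lemma not_strongly_disjoint_if_cycles:
  fixes \<alpha> :: "'a::finite \<Rightarrow> 'a \<Rightarrow> real" and \<beta> :: "'b::finite \<Rightarrow> 'b \<Rightarrow> real"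
  assumes \<alpha>: "weight_fun \<alpha>" and \<beta>: "weight_fun \<beta>"
    and us: "is_cycle (\<lambda>u u'. \<alpha> u u' > 0) us" and vs: "is_cycle (\<lambda>v v'. \<beta> v v' > 0) vs"
  shows "\<not> strongly_disjoint \<alpha> \<beta>"
proof
  assume strong: "strongly_disjoint \<alpha> \<beta>"
  define \<delta> where "\<delta> x y = circulation us (fst x) (fst y) * circulation vs (snd x) (snd y)"
    for x y :: "'a \<times> 'b"
  have "tensor \<alpha> \<beta> x y > 0" if "\<delta> x y \<noteq> 0" for x y
  proof -
    have "circulation us (fst x) (fst y) \<noteq> 0" "circulation vs (snd x) (snd y) \<noteq> 0"
      using that by (auto simp: \<delta>_def)
    then have "\<alpha> (fst x) (fst y) > 0" "\<beta> (snd x) (snd y) > 0"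
      using circulation_pos_if_nonzero[OF \<alpha> us] circulation_pos_if_nonzero[OF \<beta> vs] by blast+
    then show ?thesis by (simp add: tensor_def)
  qed
  moreover have "tensor \<alpha> \<beta> x y \<ge> 0" for x y
    using weight_fun_nonneg[OF \<alpha>] weight_fun_nonneg[OF \<beta>] by (simp add: tensor_def)
  ultimately obtain \<epsilon> :: real where "\<epsilon> > 0" and nonneg: "\<And>x y. tensor \<alpha> \<beta> x y + \<epsilon> * \<delta> x y \<ge> 0"
    using exists_pos_add_mult_nonneg[of "\<lambda>(x, y). tensor \<alpha> \<beta> x y" "\<lambda>(x, y). \<delta> x y"] by auto
  have "weight_joining \<alpha> \<beta> (\<lambda>x y. tensor \<alpha> \<beta> x y + \<epsilon> * \<delta> x y)"
  proof (rule weight_joining_tensor_add[OF \<alpha> \<beta> nonneg])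
    show "\<epsilon> * \<delta> x y = \<epsilon> * \<delta> y x" for x y
      by (simp add: \<delta>_def circulation_antisym[of us "fst x"] circulation_antisym[of vs "snd x"])
    show "(\<Sum>v'\<in>UNIV. \<epsilon> * \<delta> (u, v) (u', v')) = 0" for u v u'
      by (simp add: \<delta>_def sum_distrib_left[symmetric] sum_circulation)
    show "(\<Sum>u'\<in>UNIV. \<epsilon> * \<delta> (u, v) (u', v')) = 0" for u v v'
      by (simp add: \<delta>_def sum_distrib_left[symmetric] sum_distrib_right[symmetric] sum_circulation)
  qed
  then have perturbed_eq: "(\<lambda>x y. tensor \<alpha> \<beta> x y + \<epsilon> * \<delta> x y) = tensor \<alpha> \<beta>"
    using strong unfolding strongly_disjoint_def by blast
  have "\<delta> x y = 0" for x y
    using fun_cong[OF fun_cong[OF perturbed_eq, of x], of y] \<open>\<epsilon> > 0\<close> by simp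
  moreover have "\<delta> (us ! 0, vs ! 0) (us ! 1, vs ! 1) = 1"
    using circulation_first_edge[OF us] circulation_first_edge[OF vs] by (simp add: \<delta>_def)
  ultimately show False by simp
qed

theorem corollary5p6:
  fixes \<alpha> :: "'a::finite \<Rightarrow> 'a \<Rightarrow> real" and \<beta> :: "'b::finite \<Rightarrow> 'b \<Rightarrow> real"
  assumes "weight_fun \<alpha>" and "weight_fun \<beta>"
    and "fully_supported \<alpha>" and "fully_supported \<beta>"
    and "no_self_loops \<alpha>" and "no_self_loops \<beta>"
  shows "strongly_disjoint \<alpha> \<beta> \<longleftrightarrow>
           weakly_disjoint \<alpha> \<beta> \<and> (forest \<alpha> \<noteq> forest \<beta>)"
proof
  assume strong: "strongly_disjoint \<alpha> \<beta>"
  have "forest \<alpha> \<noteq> forest \<beta>"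
  proof
    assume "forest \<alpha> = forest \<beta>"
    then consider "forest \<alpha>" "forest \<beta>"
      | us vs where "is_cycle (\<lambda>u u'. \<alpha> u u' > 0) us" "is_cycle (\<lambda>v v'. \<beta> v v' > 0) vs"
      using forest_iff_no_cycle[OF assms(5)] forest_iff_no_cycle[OF assms(6)] by blast
    then show False
    proof cases
      case 1
      then show False using strong not_strongly_disjoint_if_forests[OF assms(1,2,5,6)] by blast
    next
      case 2
      then show False using strong not_strongly_disjoint_if_cycles[OF assms(1,2)] by blast
    qed
  qed
  then show "weakly_disjoint \<alpha> \<beta> \<and> (forest \<alpha> \<noteq> forest \<beta>)"
    using weakly_disjoint_if_strongly_disjoint[OF strong] by blast
next
  assume "weakly_disjoint \<alpha> \<beta> \<and> (forest \<alpha> \<noteq> forest \<beta>)"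
  then consider "forest \<alpha>" "weakly_disjoint \<alpha> \<beta>" | "forest \<beta>" "weakly_disjoint \<beta> \<alpha>"
    using weakly_disjoint_sym by metis
  then show "strongly_disjoint \<alpha> \<beta>"
  proof cases
    case 1
    then show ?thesis using strongly_disjoint_if_forest[OF assms(1-5)] by simp
  next
    case 2
    then show ?thesis
      using strongly_disjoint_if_forest[OF assms(2,1,4,3,6)] strongly_disjoint_sym by simp
  qed
qed

end
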